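(* Let $S$ be a finite nonempty semigroup, and suppose $S$ satisfies an identity $x_{\lambda_1}x_{\lambda_2}\cdots x_{\lambda_\ell}=x_{\lambda'_1}x_{\lambda'_2}\cdots x_{\lambda'_{\ell'}}$ (with $\ell,\ell'\ge 1$ and indices $\lambda_a,\lambda'_b$ drawn from a set of variables $\{x_1,x_2,x_3,\dots\}$) for every substitution of elements of $S$ for the variables. If $\lambda_1\neq\lambda'_1$, then $S$ is $K$-thin. Dually, if $\lambda_\ell\neq\lambda'_{\ell'}$, then $S$ is $K$-thin.
   Context: For a finite nonempty semigroup $S$, the minimal ideal $K(S)$ is the intersection of all nonempty two-sided ideals of $S$. A Rees matrix semigroup $\mathcal{M}(H;I,J;p)$, for sets $I,J$, a group $H$ and a function $p\colon J\times I\to H$, is the set $I\times H\times J$ with product $(i,h,j)(i',h',j')=(i,h\,p(j,i')\,h',j')$. It is known that $K(S)$ is always isomorphic to such a Rees matrix semigroup with $H$ a finite group and $p$ normalized (i.e. $p(j_0,i)=e_H$ and $p(j,i_0)=e_H$ for some fixed $i_0\in I$, $j_0\in J$ and all $i,j$). $S$ is called $K$-thin if $K(S)$ has such a normalized Rees matrix structure with $|I|=1$ or $|J|=1$; equivalently, $K(S)$ is left-simple or right-simple. Examples of such identities are $xy=yx$ (commutativity) and $xya=yxa$ (left-commutativity). *)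

theory Defs
  imports Main
begin

text \<open>A finite nonempty semigroup is modelled as a type of class
  semigroup_mult and finite (HOL types are nonempty).\<close>

fun word_val :: "(nat \<Rightarrow> 'a::semigroup_mult) \<Rightarrow> nat list \<Rightarrow> 'a" where
  "word_val f [] = undefined"
| "word_val f [x] = f x"
| "word_val f (x # y # ys) = f x * word_val f (y # ys)"

definition satisfies_identity :: "'a::semigroup_mult itself \<Rightarrow> nat list \<Rightarrow> nat list \<Rightarrow> bool" where
  "satisfies_identity _ u v \<longleftrightarrow> (\<forall>f :: nat \<Rightarrow> 'a. word_val f u = word_val f v)"

definition two_sided_ideal :: "'a::semigroup_mult set \<Rightarrow> bool" where
  "two_sided_ideal A \<longleftrightarrow> A \<noteq> {} \<and> (\<forall>a\<in>A. \<forall>s. s * a \<in> A \<and> a * s \<in> A)"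

definition minimal_ideal :: "'a::semigroup_mult set" where
  "minimal_ideal = \<Inter> {A. two_sided_ideal A}"

definition left_ideal_of :: "'a::semigroup_mult set \<Rightarrow> 'a set \<Rightarrow> bool" where
  "left_ideal_of T L \<longleftrightarrow> L \<noteq> {} \<and> L \<subseteq> T \<and> (\<forall>t\<in>T. \<forall>a\<in>L. t * a \<in> L)"

definition right_ideal_of :: "'a::semigroup_mult set \<Rightarrow> 'a set \<Rightarrow> bool" where
  "right_ideal_of T R \<longleftrightarrow> R \<noteq> {} \<and> R \<subseteq> T \<and> (\<forall>t\<in>T. \<forall>a\<in>R. a * t \<in> R)"

definition left_simple :: "'a::semigroup_mult set \<Rightarrow> bool" where
  "left_simple T \<longleftrightarrow> (\<forall>L. left_ideal_of T L \<longrightarrow> L = T)"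

definition right_simple :: "'a::semigroup_mult set \<Rightarrow> bool" where
  "right_simple T \<longleftrightarrow> (\<forall>R. right_ideal_of T R \<longrightarrow> R = T)"

definition K_thin :: "'a::semigroup_mult itself \<Rightarrow> bool" where
  "K_thin _ \<longleftrightarrow> left_simple (minimal_ideal :: 'a set) \<or> right_simple (minimal_ideal :: 'a set)"

end

theory Submission
  imports Defs
begin

text \<open>In a finite semigroup the minimal ideal \<open>K\<close> is a nonempty ideal with \<open>K = K x K\<close>
  for every \<open>x \<in> K\<close>; combined with the eventual periodicity of powers this gives
  \<open>k \<in> k w K\<close> and \<open>k \<in> K w k\<close> for all \<open>k, w \<in> K\<close>. Hence, for a right ideal \<open>R\<close> of \<open>K\<close>,
  a product \<open>k w\<^sub>1 \<dots> w\<^sub>n\<close> of elements of \<open>K\<close> lies in \<open>R\<close> iff its first factor \<open>k\<close> does.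
  Substitute some \<open>r \<in> R\<close> for the first variable of the right-hand word and an arbitrary
  \<open>k \<in> K\<close> for all other variables: the identity then forces \<open>k \<in> R\<close>, so \<open>K\<close> is right
  simple. Dually, distinct last letters make \<open>K\<close> left simple.\<close>

text \<open>\<open>ppow t n\<close> is \<open>t\<^sup>n\<^sup>+\<^sup>1\<close>: a semigroup has no unit.\<close>
fun ppow :: "'a::semigroup_mult \<Rightarrow> nat \<Rightarrow> 'a" where
  "ppow t 0 = t"
| "ppow t (Suc n) = ppow t n * t"

lemma ppow_Suc_left: "ppow t (Suc n) = t * ppow t n"
  by (induction n) (simp_all add: mult.assoc)

lemma ppow_add: "ppow t (m + Suc n) = ppow t m * ppow t n"
  by (induction n) (simp_all add: mult.assoc)

lemma ppow_commute: "ppow t m * ppow t n = ppow t n * ppow t m"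
  by (metis ppow_add add_Suc_right add.commute)

lemma ppow_periodic:
  fixes t :: "'a::{semigroup_mult, finite}"
  obtains i n where "ppow t i * ppow t (Suc n) = ppow t i"
proof -
  have "\<not> inj (ppow t)"
    using finite_imageD[of "ppow t" UNIV] by auto
  then obtain i j where ij: "i < j" "ppow t i = ppow t j"
    unfolding inj_def by (metis linorder_neqE_nat)
  define q where "q = j - Suc i"
  have "ppow t i * ppow t q = ppow t j"
    using ppow_add[of t i q] ij(1) unfolding q_def by simp
  with ij(2) have q: "ppow t i * ppow t q = ppow t i"
    by simp
  \<comment> \<open>squaring the factor \<open>ppow t q\<close> leaves a spare \<open>t\<close> in it, even when \<open>q = 0\<close>\<close>
  have "ppow t i * ppow t (Suc (q + q)) = ppow t i * ppow t q * ppow t q"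
    using ppow_add[of t q q] by (simp add: mult.assoc)
  with q have "ppow t i * ppow t (Suc (q + q)) = ppow t i"
    by simp
  then show thesis
    by (rule that)
qed

lemma ppow_conjugate_fixed:
  assumes "k = u * k * t"
  shows "k = ppow u n * k * ppow t n"
proof (induction n)
  case (Suc n)
  have "ppow u (Suc n) * k * ppow t (Suc n) = u * (ppow u n * k * ppow t n) * t"
    by (simp only: ppow_Suc_left[of u n] ppow.simps(2)[of t n] mult.assoc)
  with Suc assms show ?case
    by simp
qed (use assms in simp)

text \<open>Iterating \<open>k = u k t\<close> to \<open>k = u\<^sup>i k t\<^sup>i\<close> with \<open>t\<^sup>i\<close> periodic lets one power of \<open>t\<close>
  be absorbed by \<open>k\<close>.\<close>
lemma fixed_two_sided_right_absorb:
  fixes k :: "'a::{semigroup_mult, finite}"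
  assumes "k = u * k * t"
  obtains s where "k = k * t * s"
proof -
  obtain i n where per: "ppow t i * ppow t (Suc n) = ppow t i"
    using ppow_periodic by blast
  have conj: "ppow u i * k * ppow t i = k"
    using ppow_conjugate_fixed[OF assms, of i] by simp
  have "k = ppow u i * k * (ppow t i * ppow t (Suc n))"
    using conj per by simp
  also have "\<dots> = k * ppow t (Suc n)"
    using conj by (simp only: mult.assoc[symmetric])
  also have "\<dots> = k * t * ppow t n"
    by (simp only: ppow_Suc_left mult.assoc)
  finally show thesis
    by (rule that)
qed

lemma fixed_two_sided_left_absorb:
  fixes k :: "'a::{semigroup_mult, finite}"
  assumes "k = t * k * v"
  obtains s where "k = s * t * k"
proof -
  obtain i n where per: "ppow t (Suc n) * ppow t i = ppow t i"
    using ppow_periodic ppow_commute by metis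
  have conj: "ppow t i * k * ppow v i = k"
    using ppow_conjugate_fixed[OF assms, of i] by simp
  have "k = (ppow t (Suc n) * ppow t i) * k * ppow v i"
    using conj per by simp
  also have "\<dots> = ppow t (Suc n) * k"
    using conj by (simp only: mult.assoc)
  also have "\<dots> = ppow t n * t * k"
    by simp
  finally show thesis
    by (rule that)
qed

lemma minimal_ideal_subset: "two_sided_ideal A \<Longrightarrow> minimal_ideal \<subseteq> A"
  unfolding minimal_ideal_def by blast

lemma minimal_ideal_mult:
  assumes "a \<in> minimal_ideal"
  shows "s * a \<in> minimal_ideal" and "a * s \<in> minimal_ideal"
proof -
  have "s * a \<in> A \<and> a * s \<in> A" if "two_sided_ideal A" for A
    using that assms minimal_ideal_subset[OF that] unfolding two_sided_ideal_def by blast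
  then show "s * a \<in> minimal_ideal" "a * s \<in> minimal_ideal"
    unfolding minimal_ideal_def by blast+
qed

lemma word_val_in_two_sided_ideal:
  assumes "two_sided_ideal A" "x \<in> set w" "f x \<in> A"
  shows "word_val f w \<in> A"
  using assms(2,3)
  by (induction f w rule: word_val.induct) (use assms(1) in \<open>auto simp: two_sided_ideal_def\<close>)

text \<open>The product of all elements of \<open>S\<close> lies in every ideal.\<close>
lemma minimal_ideal_nonempty: "(minimal_ideal :: 'a::{semigroup_mult, finite} set) \<noteq> {}"
proof -
  obtain xs :: "'a list" where xs: "set xs = UNIV"
    using finite_list[OF finite_UNIV] by blast
  have "word_val (nth xs) [0..<length xs] \<in> A" if A: "two_sided_ideal A" for A
  proof -
    obtain a where "a \<in> A"
      using A unfolding two_sided_ideal_def by blast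
    moreover obtain j where "j < length xs" "xs ! j = a"
      using in_set_conv_nth[of a xs] xs by auto
    ultimately have "j \<in> set [0..<length xs]" "xs ! j \<in> A"
      by auto
    then show ?thesis
      by (rule word_val_in_two_sided_ideal[OF A])
  qed
  then have "word_val (nth xs) [0..<length xs] \<in> minimal_ideal"
    unfolding minimal_ideal_def by blast
  then show ?thesis
    by blast
qed

lemma two_sided_ideal_minimal_ideal:
  "two_sided_ideal (minimal_ideal :: 'a::{semigroup_mult, finite} set)"
  unfolding two_sided_ideal_def[of minimal_ideal]
  using minimal_ideal_nonempty minimal_ideal_mult by blast

lemma minimal_ideal_simple:
  fixes x :: "'a::{semigroup_mult, finite}"
  assumes "x \<in> minimal_ideal" "k \<in> minimal_ideal"
  obtains u v where "u \<in> minimal_ideal" "v \<in> minimal_ideal" "k = u * x * v"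
proof -
  let ?K = "minimal_ideal :: 'a set"
  let ?A = "{u * x * v | u v. u \<in> ?K \<and> v \<in> ?K}"
  have "s * a \<in> ?A \<and> a * s \<in> ?A" if "a \<in> ?A" for a s
  proof -
    obtain u v where uv: "a = u * x * v" "u \<in> ?K" "v \<in> ?K"
      using \<open>a \<in> ?A\<close> by blast
    then have "s * a = (s * u) * x * v" "a * s = u * x * (v * s)"
      by (simp_all add: mult.assoc)
    with uv show ?thesis
      using minimal_ideal_mult by blast
  qed
  moreover have "x * x * x \<in> ?A"
    using assms(1) by blast
  ultimately have "two_sided_ideal ?A"
    unfolding two_sided_ideal_def by blast
  then have "k \<in> ?A"
    using minimal_ideal_subset assms(2) by blast
  then show thesis
    using that by blast
qed

lemma minimal_ideal_right_absorb:
  fixes k :: "'a::{semigroup_mult, finite}"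
  assumes "k \<in> minimal_ideal" "w \<in> minimal_ideal"
  obtains z where "z \<in> minimal_ideal" "k = k * w * z"
proof -
  obtain u v where v: "v \<in> minimal_ideal" and "k = u * (k * w) * v"
    using minimal_ideal_simple[OF minimal_ideal_mult(2)[OF assms(1)] assms(1)] by blast
  then have "k = u * k * (w * v)"
    by (simp add: mult.assoc)
  then obtain s where "k = k * (w * v) * s"
    by (rule fixed_two_sided_right_absorb)
  then have "k = k * w * (v * s)"
    by (simp only: mult.assoc)
  then show thesis
    using that minimal_ideal_mult(2)[OF v] by blast
qed

lemma minimal_ideal_left_absorb:
  fixes k :: "'a::{semigroup_mult, finite}"
  assumes "k \<in> minimal_ideal" "w \<in> minimal_ideal"
  obtains z where "z \<in> minimal_ideal" "k = z * w * k"
proof -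
  obtain u v where u: "u \<in> minimal_ideal" and "k = u * (w * k) * v"
    using minimal_ideal_simple[OF minimal_ideal_mult(1)[OF assms(1)] assms(1)] by blast
  then have "k = (u * w) * k * v"
    by (simp add: mult.assoc)
  then obtain s where "k = s * (u * w) * k"
    by (rule fixed_two_sided_left_absorb)
  then have "k = (s * u) * w * k"
    by (simp only: mult.assoc)
  then show thesis
    using that minimal_ideal_mult(1)[OF u] by blast
qed

lemma right_ideal_of_minimal_ideal_mult_iff:
  fixes k :: "'a::{semigroup_mult, finite}"
  assumes "right_ideal_of minimal_ideal R" "k \<in> minimal_ideal" "w \<in> minimal_ideal"
  shows "k * w \<in> R \<longleftrightarrow> k \<in> R"
proof
  assume "k * w \<in> R"
  obtain z where z: "z \<in> minimal_ideal" and k: "k = k * w * z"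
    using minimal_ideal_right_absorb[OF assms(2,3)] by blast
  from z \<open>k * w \<in> R\<close> have "k * w * z \<in> R"
    using assms(1) unfolding right_ideal_of_def by blast
  then show "k \<in> R"
    by (simp only: k[symmetric])
next
  show "k \<in> R \<Longrightarrow> k * w \<in> R"
    using assms(1,3) unfolding right_ideal_of_def by blast
qed

lemma left_ideal_of_minimal_ideal_mult_iff:
  fixes k :: "'a::{semigroup_mult, finite}"
  assumes "left_ideal_of minimal_ideal L" "k \<in> minimal_ideal" "w \<in> minimal_ideal"
  shows "w * k \<in> L \<longleftrightarrow> k \<in> L"
proof
  assume "w * k \<in> L"
  obtain z where z: "z \<in> minimal_ideal" and k: "k = z * w * k"
    using minimal_ideal_left_absorb[OF assms(2,3)] by blast
  from z \<open>w * k \<in> L\<close> have "z * (w * k) \<in> L"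
    using assms(1) unfolding left_ideal_of_def by blast
  then show "k \<in> L"
    by (simp only: k[symmetric] mult.assoc[symmetric])
next
  show "k \<in> L \<Longrightarrow> w * k \<in> L"
    using assms(1,3) unfolding left_ideal_of_def by blast
qed

lemma word_val_Cons: "w \<noteq> [] \<Longrightarrow> word_val f (x # w) = f x * word_val f w"
  by (cases w) simp_all

lemma word_val_append_singleton:
  "w \<noteq> [] \<Longrightarrow> word_val f (w @ [x]) = word_val f w * f x"
  by (induction f w rule: word_val.induct) (auto simp: mult.assoc)

lemma word_val_in_minimal_ideal:
  fixes f :: "nat \<Rightarrow> 'a::{semigroup_mult, finite}"
  assumes "w \<noteq> []" "range f \<subseteq> minimal_ideal"
  shows "word_val f w \<in> minimal_ideal"
  using assms word_val_in_two_sided_ideal[OF two_sided_ideal_minimal_ideal hd_in_set[OF assms(1)]]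
  by blast

lemma word_val_in_right_ideal_of_minimal_ideal_iff:
  fixes f :: "nat \<Rightarrow> 'a::{semigroup_mult, finite}"
  assumes "right_ideal_of minimal_ideal R" "range f \<subseteq> minimal_ideal" "w \<noteq> []"
  shows "word_val f w \<in> R \<longleftrightarrow> f (hd w) \<in> R"
proof -
  obtain x v where w: "w = x # v"
    using assms(3) by (cases w) auto
  show ?thesis
  proof (cases "v = []")
    case False
    then have "word_val f w = f x * word_val f v"
      by (simp add: w word_val_Cons)
    moreover have "f x \<in> minimal_ideal" "word_val f v \<in> minimal_ideal"
      using assms(2) word_val_in_minimal_ideal[OF False assms(2)] by auto
    ultimately show ?thesis
      using right_ideal_of_minimal_ideal_mult_iff[OF assms(1)] by (simp add: w)
  qed (simp add: w)
qed

lemma word_val_in_left_ideal_of_minimal_ideal_iff: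
  fixes f :: "nat \<Rightarrow> 'a::{semigroup_mult, finite}"
  assumes "left_ideal_of minimal_ideal L" "range f \<subseteq> minimal_ideal" "w \<noteq> []"
  shows "word_val f w \<in> L \<longleftrightarrow> f (last w) \<in> L"
proof -
  obtain v x where w: "w = v @ [x]"
    using assms(3) by (cases w rule: rev_cases) auto
  show ?thesis
  proof (cases "v = []")
    case False
    then have "word_val f w = word_val f v * f x"
      by (simp add: w word_val_append_singleton)
    moreover have "f x \<in> minimal_ideal" "word_val f v \<in> minimal_ideal"
      using assms(2) word_val_in_minimal_ideal[OF False assms(2)] by auto
    ultimately show ?thesis
      using left_ideal_of_minimal_ideal_mult_iff[OF assms(1)] by (simp add: w)
  qed (simp add: w)
qed

lemma right_simple_minimal_ideal_if_hd_differs: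
  assumes "u \<noteq> []" "v \<noteq> []" "satisfies_identity TYPE('a::{semigroup_mult, finite}) u v"
    and "hd u \<noteq> hd v"
  shows "right_simple (minimal_ideal :: 'a set)"
  unfolding right_simple_def
proof (intro allI impI)
  fix R assume R: "right_ideal_of (minimal_ideal :: 'a set) R"
  then obtain r where r: "r \<in> R" "R \<subseteq> minimal_ideal"
    unfolding right_ideal_of_def by blast
  have "k \<in> R" if k: "k \<in> minimal_ideal" for k
  proof -
    define f where "f x = (if x = hd v then r else k)" for x
    have f: "range f \<subseteq> minimal_ideal"
      using r k unfolding f_def by auto
    have "word_val f v \<in> R"
      using word_val_in_right_ideal_of_minimal_ideal_iff[OF R f assms(2)] r by (simp add: f_def)
    then have "word_val f u \<in> R"
      using assms(3) unfolding satisfies_identity_def by simp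
    then show "k \<in> R"
      using word_val_in_right_ideal_of_minimal_ideal_iff[OF R f assms(1)] assms(4) by (simp add: f_def)
  qed
  then show "R = minimal_ideal"
    using r(2) by blast
qed

lemma left_simple_minimal_ideal_if_last_differs:
  assumes "u \<noteq> []" "v \<noteq> []" "satisfies_identity TYPE('a::{semigroup_mult, finite}) u v"
    and "last u \<noteq> last v"
  shows "left_simple (minimal_ideal :: 'a set)"
  unfolding left_simple_def
proof (intro allI impI)
  fix L assume L: "left_ideal_of (minimal_ideal :: 'a set) L"
  then obtain r where r: "r \<in> L" "L \<subseteq> minimal_ideal"
    unfolding left_ideal_of_def by blast
  have "k \<in> L" if k: "k \<in> minimal_ideal" for k
  proof -
    define f where "f x = (if x = last v then r else k)" for x
    have f: "range f \<subseteq> minimal_ideal"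
      using r k unfolding f_def by auto
    have "word_val f v \<in> L"
      using word_val_in_left_ideal_of_minimal_ideal_iff[OF L f assms(2)] r by (simp add: f_def)
    then have "word_val f u \<in> L"
      using assms(3) unfolding satisfies_identity_def by simp
    then show "k \<in> L"
      using word_val_in_left_ideal_of_minimal_ideal_iff[OF L f assms(1)] assms(4) by (simp add: f_def)
  qed
  then show "L = minimal_ideal"
    using r(2) by blast
qed

theorem theorem7p9:
  fixes lam lam' :: "nat list"
  assumes "lam \<noteq> []" and "lam' \<noteq> []"
    and "satisfies_identity TYPE('a::{semigroup_mult, finite}) lam lam'"
  shows "(hd lam \<noteq> hd lam' \<longrightarrow> K_thin TYPE('a)) \<and>
         (last lam \<noteq> last lam' \<longrightarrow> K_thin TYPE('a))"
  using right_simple_minimal_ideal_if_hd_differs[OF assms]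
    left_simple_minimal_ideal_if_last_differs[OF assms]
  unfolding K_thin_def by blast

end
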